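(* Let $\mathit{VI}$ be a finite set of variables with $\#\mathit{VI}=n$. Let $\mathit{PSD}^{+}=\{sh\in\mathit{PSD}\mid\forall x\in\mathit{VI}:\{x\}\in sh\}$, $\mathit{Def}^{-}=\mathit{PSD}\sim\mathit{PSD}^{+}$, and $\mathit{PSD}^{\ddagger}=\{sh\in\mathit{PSD}\mid\mathit{VI}\in sh,\ \forall x\in\mathit{VI}:\{x\}\in sh\}$. Then $\mathit{Def}^{-}$, $\mathit{PS}$, and $\mathit{PSD}^{\ddagger}$ form a minimal decomposition for $\mathit{PSD}$.
   Context: $\mathit{SG}=\wp(\mathit{VI})\setminus\{\emptyset\}$, $\mathit{SH}=\wp(\mathit{SG})$ ordered by inclusion. $\mathrm{pairs}(S)=\{T\subseteq S\mid\#T=2\}$, $\mathrm{pairs}(sh)=\bigcup_{S'\in sh}\mathrm{pairs}(S')$, $\mathit{PS}=\{\rho_{\mathit{PS}}(sh)\mid sh\in\mathit{SH}\}$ with $\rho_{\mathit{PS}}(sh)=\{S\in\mathit{SG}\mid\mathrm{pairs}(S)\subseteq\mathrm{pairs}(sh)\}$. $\mathit{PSD}=\{\rho_{\mathit{PSD}}(sh)\mid sh\in\mathit{SH}\}$ with $\rho_{\mathit{PSD}}(sh)=\{\,S\in\mathit{SG}\mid \forall T\subseteq S:\ \#T<2\implies S=\bigcup\{U\in sh\mid T\subseteq U\subseteq S\}\,\}$; it is a complete lattice under inclusion. Upper closure operators on a complete lattice $C$ are identified with their images (subsets closed under arbitrary meets); $\mathrm{uco}(C)$ is ordered by $\rho_1\sqsubseteq\rho_2$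 iff $\rho_2(C)\subseteq\rho_1(C)$, with reduced product $\sqcap$ the glb (image = meet-closure of the union of images). For $D\subseteq C$ the image of some $\rho\in\mathrm{uco}(C)$, $C\sim D=\mathrm{lub}\{\rho_2\in\mathrm{uco}(C)\mid\rho\sqcap\rho_2=\mathit{id}_C\}$. A family $D_1,\dots,D_m$ of such images is a decomposition of $C$ if $C=D_1\sqcap\dots\sqcap D_m$; it is minimal if for each $i$ and each $E_i\in\mathrm{uco}(C)$ with $D_i\sqsubset E_i$, one has $C\sqsubset D_1\sqcap\dots\sqcap D_{i-1}\sqcap E_i\sqcap D_{i+1}\sqcap\dots\sqcap D_m$. *)

theory Defs
  imports Main
begin

definition SG :: "'a set \<Rightarrow> 'a set set" where
  "SG VI = Pow VI - {{}}"

definition SH :: "'a set \<Rightarrow> 'a set set set" where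
  "SH VI = Pow (SG VI)"

definition pairs :: "'a set \<Rightarrow> 'a set set" where
  "pairs S = {T. T \<subseteq> S \<and> card T = 2}"

definition pairs_sh :: "'a set set \<Rightarrow> 'a set set" where
  "pairs_sh sh = (\<Union>S'\<in>sh. pairs S')"

definition rho_PS :: "'a set \<Rightarrow> 'a set set \<Rightarrow> 'a set set" where
  "rho_PS VI sh = {S \<in> SG VI. pairs S \<subseteq> pairs_sh sh}"

definition PS :: "'a set \<Rightarrow> 'a set set set" where
  "PS VI = rho_PS VI ` SH VI"

definition rho_PSD :: "'a set \<Rightarrow> 'a set set \<Rightarrow> 'a set set" where
  "rho_PSD VI sh = {S \<in> SG VI. \<forall>T. T \<subseteq> S \<longrightarrow> card T < 2 \<longrightarrow>
                       S = \<Union>{U \<in> sh. T \<subseteq> U \<and> U \<subseteq> S}}"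

definition PSD :: "'a set \<Rightarrow> 'a set set set" where
  "PSD VI = rho_PSD VI ` SH VI"

definition PSD_plus :: "'a set \<Rightarrow> 'a set set set" where
  "PSD_plus VI = {sh \<in> PSD VI. \<forall>x\<in>VI. {x} \<in> sh}"

definition PSD_ddag :: "'a set \<Rightarrow> 'a set set set" where
  "PSD_ddag VI = {sh \<in> PSD VI. VI \<in> sh \<and> (\<forall>x\<in>VI. {x} \<in> sh)}"

definition is_glb_in :: "'b set set \<Rightarrow> 'b set set \<Rightarrow> 'b set \<Rightarrow> bool" where
  "is_glb_in C X m \<longleftrightarrow> m \<in> C \<and> (\<forall>x\<in>X. m \<subseteq> x) \<and>
                         (\<forall>m'\<in>C. (\<forall>x\<in>X. m' \<subseteq> x) \<longrightarrow> m' \<subseteq> m)"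

definition glb_in :: "'b set set \<Rightarrow> 'b set set \<Rightarrow> 'b set" where
  "glb_in C X = (THE m. is_glb_in C X m)"

text \<open>Images of upper closure operators on C: subsets of C closed under arbitrary meets.\<close>
definition uco_img :: "'b set set \<Rightarrow> 'b set set \<Rightarrow> bool" where
  "uco_img C D \<longleftrightarrow> D \<subseteq> C \<and> (\<forall>X. X \<subseteq> D \<longrightarrow> glb_in C X \<in> D)"

text \<open>Order on uco(C): rho1 below rho2 iff image of rho2 is contained in image of rho1.\<close>
definition uco_le :: "'b set set \<Rightarrow> 'b set set \<Rightarrow> bool" where
  "uco_le D1 D2 \<longleftrightarrow> D2 \<subseteq> D1"

definition uco_less :: "'b set set \<Rightarrow> 'b set set \<Rightarrow> bool" where
  "uco_less D1 D2 \<longleftrightarrow> uco_le D1 D2 \<and> D1 \<noteq> D2"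

text \<open>Meet-closure in C; the reduced product of images is the meet-closure of their union.\<close>
definition mclos :: "'b set set \<Rightarrow> 'b set set \<Rightarrow> 'b set set" where
  "mclos C D = {glb_in C X | X. X \<subseteq> D}"

definition rprod :: "'b set set \<Rightarrow> 'b set set list \<Rightarrow> 'b set set" where
  "rprod C Ds = mclos C (\<Union>(set Ds))"

definition uco_lub :: "'b set set \<Rightarrow> 'b set set set \<Rightarrow> 'b set set" where
  "uco_lub C S = (THE U. uco_img C U \<and> (\<forall>E\<in>S. uco_le E U) \<and>
                  (\<forall>U'. uco_img C U' \<and> (\<forall>E\<in>S. uco_le E U') \<longrightarrow> uco_le U U'))"

text \<open>Pseudo-complement C ~ D; id_C has image C.\<close>
definition uco_compl :: "'b set set \<Rightarrow> 'b set set \<Rightarrow> 'b set set" where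
  "uco_compl C D = uco_lub C {E. uco_img C E \<and> rprod C [D, E] = C}"

definition decomposition :: "'b set set \<Rightarrow> 'b set set list \<Rightarrow> bool" where
  "decomposition C Ds \<longleftrightarrow> (\<forall>D\<in>set Ds. uco_img C D) \<and> C = rprod C Ds"

definition min_decomposition :: "'b set set \<Rightarrow> 'b set set list \<Rightarrow> bool" where
  "min_decomposition C Ds \<longleftrightarrow> decomposition C Ds \<and>
     (\<forall>i < length Ds. \<forall>E. uco_img C E \<and> uco_less (Ds ! i) E \<longrightarrow>
        uco_less C (rprod C (Ds[i := E])))"

end

theory Submission
  imports Defs
begin

(* Meets in PSD are intersections relative to SG, so the whole statement becomes set algebra.
   Every sh in PSD is the intersection of three families: SG without the singletons missing
   from sh (an element of Def^-), the pair-sharing closure of sh plus all singletons (in PS),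
   and sh plus all singletons plus VI (in PSD-ddag).  Def^- is the pseudo-complement of PSD^+
   because its generators SG - {{x}} are coatoms of PSD outside PSD^+, so every complement
   must contain them.  Minimality: PS and PSD-ddag lie in PSD^+, so a smaller first component
   would no longer complement PSD^+; PS is generated by the coatoms "x and y do not share",
   which no meet of the other components reaches, since those all contain VI; and in a meet
   producing an element of PSD-ddag, every factor from Def^- or PS is the top SG. *)

section \<open>Intersection-closed families and their upper closure operators\<close>

definition Inter_closed :: "'b set \<Rightarrow> 'b set set \<Rightarrow> bool" where
  "Inter_closed A C \<longleftrightarrow> C \<subseteq> Pow A \<and> (\<forall>X\<subseteq>C. A \<inter> \<Inter>X \<in> C)"

lemma Inter_closedD: "Inter_closed A C \<Longrightarrow> X \<subseteq> C \<Longrightarrow> A \<inter> \<Inter>X \<in> C"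
  unfolding Inter_closed_def by blast

lemma is_glb_in_unique: "is_glb_in C X m \<Longrightarrow> is_glb_in C X m' \<Longrightarrow> m = m'"
  unfolding is_glb_in_def by (simp add: subset_antisym)

lemma glb_in_eqI: "is_glb_in C X m \<Longrightarrow> glb_in C X = m"
  unfolding glb_in_def by (rule the_equality) (simp_all add: is_glb_in_unique)

lemma glb_in_Inter:
  assumes "C \<subseteq> Pow A" and "A \<inter> \<Inter>X \<in> C"
  shows "glb_in C X = A \<inter> \<Inter>X"
  using assms by (intro glb_in_eqI) (auto simp: is_glb_in_def)

lemma Inter_closed_glb_in: "Inter_closed A C \<Longrightarrow> X \<subseteq> C \<Longrightarrow> glb_in C X = A \<inter> \<Inter>X"
  unfolding Inter_closed_def by (intro glb_in_Inter) auto

lemma uco_img_iff_Inter_closed: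
  assumes "Inter_closed A C"
  shows "uco_img C D \<longleftrightarrow> D \<subseteq> C \<and> Inter_closed A D"
proof (cases "D \<subseteq> C")
  case True
  then have "glb_in C X = A \<inter> \<Inter>X" if "X \<subseteq> D" for X
    using that by (intro Inter_closed_glb_in[OF assms]) blast
  moreover have "D \<subseteq> Pow A"
    using True assms unfolding Inter_closed_def by blast
  ultimately show ?thesis
    using True unfolding uco_img_def Inter_closed_def by simp
qed (auto simp: uco_img_def)

lemma uco_img_self: "Inter_closed A C \<Longrightarrow> uco_img C C"
  by (simp add: uco_img_iff_Inter_closed)

lemma mclos_subset: "uco_img C C \<Longrightarrow> D \<subseteq> C \<Longrightarrow> mclos C D \<subseteq> C"
  unfolding mclos_def uco_img_def by blast

lemma mclos_mono: "D \<subseteq> D' \<Longrightarrow> mclos C D \<subseteq> mclos C D'"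
  unfolding mclos_def by blast

lemma mem_rprod_iff:
  assumes "Inter_closed A C" and "\<Union>(set Ds) \<subseteq> C"
  shows "c \<in> rprod C Ds \<longleftrightarrow> (\<exists>X\<subseteq>\<Union>(set Ds). c = A \<inter> \<Inter>X)"
proof -
  have "glb_in C X = A \<inter> \<Inter>X" if "X \<subseteq> \<Union>(set Ds)" for X
    by (rule Inter_closed_glb_in[OF assms(1)]) (use that assms(2) in blast)
  then show ?thesis
    unfolding rprod_def mclos_def by auto
qed

lemma rprod_eqI:
  assumes "Inter_closed A C" and "\<Union>(set Ds) \<subseteq> C"
    and "\<And>c. c \<in> C \<Longrightarrow> \<exists>X\<subseteq>\<Union>(set Ds). c = A \<inter> \<Inter>X"
  shows "rprod C Ds = C"
proof
  show "rprod C Ds \<subseteq> C"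
    using assms(1,2) unfolding rprod_def by (intro mclos_subset uco_img_self)
  show "C \<subseteq> rprod C Ds"
    using assms(3) mem_rprod_iff[OF assms(1,2)] by blast
qed

lemma uco_lub_eqI:
  assumes "uco_img C U" and "U \<in> S" and "\<And>E. E \<in> S \<Longrightarrow> U \<subseteq> E"
  shows "uco_lub C S = U"
  unfolding uco_lub_def uco_le_def
proof (rule the_equality)
  fix U'
  assume "uco_img C U' \<and> (\<forall>E\<in>S. U' \<subseteq> E) \<and>
    (\<forall>U''. uco_img C U'' \<and> (\<forall>E\<in>S. U'' \<subseteq> E) \<longrightarrow> U'' \<subseteq> U')"
  then have "U' \<subseteq> U" and "U \<subseteq> U'"
    using assms by blast+
  then show "U' = U" ..
qed (use assms in blast)

lemma uco_compl_eqI: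
  assumes "uco_img C U" and "rprod C [D, U] = C"
    and "\<And>E. uco_img C E \<Longrightarrow> rprod C [D, E] = C \<Longrightarrow> U \<subseteq> E"
  shows "uco_compl C D = U"
  unfolding uco_compl_def using assms by (intro uco_lub_eqI) auto

lemma min_decompositionI:
  assumes "uco_img C C" and "decomposition C Ds"
    and "\<And>i E. i < length Ds \<Longrightarrow> uco_img C E \<Longrightarrow> E \<subset> Ds ! i \<Longrightarrow> rprod C (Ds[i := E]) \<noteq> C"
  shows "min_decomposition C Ds"
  unfolding min_decomposition_def
proof (intro conjI assms(2) allI impI)
  fix i E assume i: "i < length Ds" and E: "uco_img C E \<and> uco_less (Ds ! i) E"
  have "\<forall>D\<in>insert E (set Ds). D \<subseteq> C"
    using E assms(2) unfolding decomposition_def uco_img_def by blast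
  then have "\<Union>(set (Ds[i := E])) \<subseteq> C"
    using set_update_subset_insert[of Ds i E] by blast
  then have "rprod C (Ds[i := E]) \<subseteq> C"
    unfolding rprod_def by (rule mclos_subset[OF assms(1)])
  moreover have "rprod C (Ds[i := E]) \<noteq> C"
    using assms(3)[OF i] E unfolding uco_less_def uco_le_def by blast
  ultimately show "uco_less C (rprod C (Ds[i := E]))"
    unfolding uco_less_def uco_le_def by blast
qed

lemma Diff_singleton_mem_of_Inter_eq:
  assumes "X \<subseteq> Pow A" and "a \<in> A" and "A \<inter> \<Inter>X = A - {a}"
  shows "A - {a} \<in> X"
proof -
  obtain e where e: "e \<in> X" "a \<notin> e"
    using assms(2,3) by blast
  then have "e = A - {a}"
    using assms(1,3) by blast
  with e show ?thesis
    by simp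
qed

section \<open>Families closed under a covering relation\<close>

definition cov_closed :: "('b set \<Rightarrow> 'b \<Rightarrow> bool) \<Rightarrow> 'b set \<Rightarrow> 'b set \<Rightarrow> bool" where
  "cov_closed cov A F \<longleftrightarrow> F \<subseteq> A \<and> (\<forall>S\<in>A. cov F S \<longrightarrow> S \<in> F)"

lemma range_closure_eq_cov_closed:
  assumes refl: "\<And>F S. S \<in> F \<Longrightarrow> cov F S"
    and trans: "\<And>F S. cov {U \<in> A. cov F U} S \<Longrightarrow> cov F S"
  shows "(\<lambda>F. {S \<in> A. cov F S}) ` Pow A = {F. cov_closed cov A F}"
proof (intro equalityI subsetI)
  fix F assume "F \<in> (\<lambda>F. {S \<in> A. cov F S}) ` Pow A"
  then obtain G where F: "F = {S \<in> A. cov G S}"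
    by blast
  then show "F \<in> {F. cov_closed cov A F}"
    unfolding cov_closed_def using trans[of G] by blast
next
  fix F assume "F \<in> {F. cov_closed cov A F}"
  then have "F = {S \<in> A. cov F S}" and "F \<in> Pow A"
    unfolding cov_closed_def using refl by blast+
  then show "F \<in> (\<lambda>F. {S \<in> A. cov F S}) ` Pow A"
    by blast
qed

lemma Inter_closed_cov_closed:
  assumes mono: "\<And>F G S. cov F S \<Longrightarrow> F \<subseteq> G \<Longrightarrow> cov G S"
  shows "Inter_closed A {F. cov_closed cov A F}"
  unfolding Inter_closed_def cov_closed_def
proof (intro conjI allI impI)
  fix X assume X: "X \<subseteq> {F. F \<subseteq> A \<and> (\<forall>S\<in>A. cov F S \<longrightarrow> S \<in> F)}"
  have "S \<in> F" if "S \<in> A" "cov (A \<inter> \<Inter>X) S" "F \<in> X" for S F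
    using that X mono[of "A \<inter> \<Inter>X" S F] by blast
  then show "A \<inter> \<Inter>X \<in> {F. F \<subseteq> A \<and> (\<forall>S\<in>A. cov F S \<longrightarrow> S \<in> F)}"
    by blast
qed blast

definition singletons :: "'a set \<Rightarrow> 'a set set" where
  "singletons VI = (\<lambda>x. {x}) ` VI"

definition sub_covered :: "'a set set \<Rightarrow> 'a set \<Rightarrow> bool" where
  "sub_covered F S \<longleftrightarrow> (\<forall>x\<in>S. \<forall>y\<in>S. \<exists>U\<in>F. x \<in> U \<and> y \<in> U \<and> U \<subseteq> S)"

definition pair_covered :: "'a set set \<Rightarrow> 'a set \<Rightarrow> bool" where
  "pair_covered F S \<longleftrightarrow> (\<forall>x\<in>S. \<forall>y\<in>S. x \<noteq> y \<longrightarrow> (\<exists>U\<in>F. x \<in> U \<and> y \<in> U))"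

lemma sub_covered_mono: "sub_covered F S \<Longrightarrow> F \<subseteq> G \<Longrightarrow> sub_covered G S"
  unfolding sub_covered_def by (meson subsetD)

lemma pair_covered_mono: "pair_covered F S \<Longrightarrow> F \<subseteq> G \<Longrightarrow> pair_covered G S"
  unfolding pair_covered_def by (meson subsetD)

lemma sub_covered_imp_pair_covered: "sub_covered F S \<Longrightarrow> pair_covered F S"
  unfolding sub_covered_def pair_covered_def by meson

lemma sub_covered_trans:
  assumes "sub_covered {U \<in> A. sub_covered F U} S"
  shows "sub_covered F S"
  unfolding sub_covered_def
proof (intro ballI)
  fix x y assume "x \<in> S" "y \<in> S"
  then obtain U where U: "sub_covered F U" "x \<in> U" "y \<in> U" "U \<subseteq> S"
    using assms unfolding sub_covered_def[of "{U \<in> A. sub_covered F U}"] by blast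
  then obtain V where "V \<in> F" "x \<in> V" "y \<in> V" "V \<subseteq> U"
    unfolding sub_covered_def by meson
  with U show "\<exists>V\<in>F. x \<in> V \<and> y \<in> V \<and> V \<subseteq> S"
    by (meson order_trans)
qed

lemma pair_covered_trans: "pair_covered {U \<in> A. pair_covered F U} S \<Longrightarrow> pair_covered F S"
  unfolding pair_covered_def by (smt (verit) mem_Collect_eq)

lemma pair_covered_imp_sub_covered:
  assumes "pair_covered F S" and "singletons S \<subseteq> F" and "\<Union>F \<subseteq> S"
  shows "sub_covered F S"
  unfolding sub_covered_def
proof (intro ballI)
  fix x y assume xy: "x \<in> S" "y \<in> S"
  then obtain U where "U \<in> F" "x \<in> U" "y \<in> U"
    using assms(1,2) unfolding pair_covered_def singletons_def by (cases "x = y") blast+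
  moreover have "U \<subseteq> S"
    using \<open>U \<in> F\<close> assms(3) by blast
  ultimately show "\<exists>U\<in>F. x \<in> U \<and> y \<in> U \<and> U \<subseteq> S"
    by blast
qed

lemma sub_covered_Un_singletons:
  assumes cov: "sub_covered (F \<union> singletons B) S" and S: "\<not> (\<exists>x. S = {x})"
  shows "sub_covered F S"
  unfolding sub_covered_def
proof (intro ballI)
  fix x y assume x: "x \<in> S" and y: "y \<in> S"
  obtain z where z: "z \<in> S" "z \<noteq> x" "y = x \<or> y = z"
    using x y S by blast
  then obtain U where U: "U \<in> F \<union> singletons B" "x \<in> U" "z \<in> U" "U \<subseteq> S"
    using cov x unfolding sub_covered_def by blast
  then have "U \<in> F"
    using z(2) unfolding singletons_def by blast
  with U z(3) show "\<exists>U\<in>F. x \<in> U \<and> y \<in> U \<and> U \<subseteq> S"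
    by blast
qed

lemma sub_covered_insert:
  "sub_covered (insert A F) S \<Longrightarrow> \<not> A \<subseteq> S \<Longrightarrow> sub_covered F S"
  unfolding sub_covered_def by (metis insertE)

section \<open>The domains PS and PSD\<close>

lemma SG_iff: "S \<in> SG VI \<longleftrightarrow> S \<subseteq> VI \<and> S \<noteq> {}"
  unfolding SG_def by blast

lemma card_less_2_iff: "finite T \<Longrightarrow> card T < 2 \<longleftrightarrow> T = {} \<or> (\<exists>x. T = {x})"
  by (metis One_nat_def card.empty card_1_singleton_iff card_0_eq less_2_cases
      less_Suc_eq numeral_2_eq_2)

lemma subset_card_less_2_iff:
  assumes "finite S"
  shows "T \<subseteq> S \<and> card T < 2 \<longleftrightarrow> T = {} \<or> (\<exists>x\<in>S. T = {x})"
proof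
  assume T: "T \<subseteq> S \<and> card T < 2"
  then have "finite T"
    using assms finite_subset by blast
  then show "T = {} \<or> (\<exists>x\<in>S. T = {x})"
    using T card_less_2_iff[of T] by blast
qed auto

(* Finiteness is needed: card T = 0 for infinite T, so only for finite S are the T with
   card T < 2 exactly {} and the singletons. *)
lemma rho_PSD_eq:
  assumes "finite VI"
  shows "rho_PSD VI sh = {S \<in> SG VI. sub_covered sh S}"
proof -
  have "(\<forall>T. T \<subseteq> S \<longrightarrow> card T < 2 \<longrightarrow> S = \<Union>{U \<in> sh. T \<subseteq> U \<and> U \<subseteq> S}) \<longleftrightarrow> sub_covered sh S"
    if "S \<in> SG VI" for S
  proof -
    have "finite S"
      using that assms by (auto simp: SG_iff intro: finite_subset)
    then have "(\<forall>T. T \<subseteq> S \<longrightarrow> card T < 2 \<longrightarrow> P T) \<longleftrightarrow> P {} \<and> (\<forall>x\<in>S. P {x})" for P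
      by (simp only: imp_conjL[symmetric] subset_card_less_2_iff) blast
    then have "(\<forall>T. T \<subseteq> S \<longrightarrow> card T < 2 \<longrightarrow> S = \<Union>{U \<in> sh. T \<subseteq> U \<and> U \<subseteq> S}) \<longleftrightarrow>
        S = \<Union>{U \<in> sh. U \<subseteq> S} \<and> (\<forall>x\<in>S. S = \<Union>{U \<in> sh. x \<in> U \<and> U \<subseteq> S})"
      by simp
    also have "\<dots> \<longleftrightarrow> sub_covered sh S"
      unfolding sub_covered_def by blast
    finally show ?thesis .
  qed
  then show ?thesis
    unfolding rho_PSD_def by blast
qed

lemma rho_PS_eq: "rho_PS VI sh = {S \<in> SG VI. pair_covered sh S}"
proof -
  have "pairs S \<subseteq> pairs_sh sh \<longleftrightarrow> pair_covered sh S" for S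
  proof
    assume H: "pairs S \<subseteq> pairs_sh sh"
    show "pair_covered sh S"
      unfolding pair_covered_def
    proof (intro ballI impI)
      fix x y assume "x \<in> S" "y \<in> S" "x \<noteq> y"
      then have "{x, y} \<in> pairs S"
        by (simp add: pairs_def)
      with H obtain U where "U \<in> sh" "{x, y} \<subseteq> U"
        unfolding pairs_sh_def pairs_def by blast
      then show "\<exists>U\<in>sh. x \<in> U \<and> y \<in> U"
        by blast
    qed
  next
    assume H: "pair_covered sh S"
    show "pairs S \<subseteq> pairs_sh sh"
    proof
      fix T assume "T \<in> pairs S"
      then obtain x y where xy: "x \<noteq> y" "T = {x, y}" "x \<in> S" "y \<in> S"
        unfolding pairs_def card_2_iff by blast
      with H obtain U where "U \<in> sh" "x \<in> U" "y \<in> U"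
        unfolding pair_covered_def by blast
      with xy show "T \<in> pairs_sh sh"
        unfolding pairs_sh_def pairs_def by auto
    qed
  qed
  then show ?thesis
    unfolding rho_PS_def by blast
qed

lemma PS_eq: "PS VI = {p. cov_closed pair_covered (SG VI) p}"
  unfolding PS_def SH_def rho_PS_eq
  by (rule range_closure_eq_cov_closed[OF _ pair_covered_trans]) (auto simp: pair_covered_def)

lemma PS_memD:
  assumes "p \<in> PS VI"
  shows PS_subset_SG: "p \<subseteq> SG VI"
    and PS_closed: "S \<in> SG VI \<Longrightarrow> pair_covered p S \<Longrightarrow> S \<in> p"
  using assms unfolding PS_eq cov_closed_def by blast+

lemma Inter_closed_PS: "Inter_closed (SG VI) (PS VI)"
  unfolding PS_eq by (rule Inter_closed_cov_closed) (rule pair_covered_mono)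

lemma PS_top: "p \<in> PS VI \<Longrightarrow> VI \<in> p \<Longrightarrow> p = SG VI"
  unfolding PS_eq cov_closed_def pair_covered_def SG_def by blast

(* The paper defines Def^- as PSD ~ PSD^+; this is its closed form (see uco_compl_PSD_plus). *)
definition Def_minus :: "'a set \<Rightarrow> 'a set set set" where
  "Def_minus VI = {D. D \<subseteq> SG VI \<and> SG VI - D \<subseteq> singletons VI}"

definition not_sharing :: "'a set \<Rightarrow> 'a \<Rightarrow> 'a \<Rightarrow> 'a set set" where
  "not_sharing VI x y = {S \<in> SG VI. \<not> {x, y} \<subseteq> S}"

lemma singletons_subset_SG: "singletons VI \<subseteq> SG VI"
  unfolding singletons_def SG_def by blast

lemma Inter_closed_Def_minus: "Inter_closed (SG VI) (Def_minus VI)"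
  unfolding Inter_closed_def Def_minus_def by blast

lemma Def_minus_top: "D \<in> Def_minus VI \<Longrightarrow> singletons VI \<subseteq> D \<Longrightarrow> D = SG VI"
  unfolding Def_minus_def by blast

lemma Diff_in_Def_minus: "Y \<subseteq> singletons VI \<Longrightarrow> SG VI - Y \<in> Def_minus VI"
  unfolding Def_minus_def by blast

lemma Def_minus_eq_Inter:
  "D \<in> Def_minus VI \<Longrightarrow> D = SG VI \<inter> \<Inter>((\<lambda>S. SG VI - {S}) ` (SG VI - D))"
  unfolding Def_minus_def by blast

lemma not_sharing_PS: "x \<noteq> y \<Longrightarrow> not_sharing VI x y \<in> PS VI"
  unfolding PS_eq cov_closed_def pair_covered_def not_sharing_def by blast

lemma PS_eq_Inter_not_sharing:
  assumes "p \<in> PS VI"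
  shows "p = SG VI \<inter> \<Inter>{not_sharing VI x y | x y. x \<in> VI \<and> y \<in> VI \<and> x \<noteq> y \<and> p \<subseteq> not_sharing VI x y}"
    (is "p = SG VI \<inter> \<Inter>?N")
proof
  show "p \<subseteq> SG VI \<inter> \<Inter>?N"
    using assms unfolding PS_eq cov_closed_def by blast
next
  show "SG VI \<inter> \<Inter>?N \<subseteq> p"
  proof
    fix S assume S: "S \<in> SG VI \<inter> \<Inter>?N"
    have "pair_covered p S"
      unfolding pair_covered_def
    proof (intro ballI impI)
      fix x y assume xy: "x \<in> S" "y \<in> S" "x \<noteq> y"
      show "\<exists>U\<in>p. x \<in> U \<and> y \<in> U"
      proof (rule ccontr)
        assume "\<not> (\<exists>U\<in>p. x \<in> U \<and> y \<in> U)"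
        then have "p \<subseteq> not_sharing VI x y"
          using assms unfolding PS_eq cov_closed_def not_sharing_def by blast
        moreover have "x \<in> VI" "y \<in> VI"
          using S xy unfolding SG_def by blast+
        ultimately have "S \<in> not_sharing VI x y"
          using S xy(3) by blast
        with xy show False
          unfolding not_sharing_def by blast
      qed
    qed
    with S assms show "S \<in> p"
      unfolding PS_eq cov_closed_def by blast
  qed
qed

lemma PS_above_not_sharing:
  assumes p: "p \<in> PS VI" and sub: "not_sharing VI x y \<subseteq> p"
    and xy: "x \<in> VI" "y \<in> VI" "x \<noteq> y"
  shows "p = not_sharing VI x y \<or> p = SG VI"
proof (cases "\<exists>U\<in>p. x \<in> U \<and> y \<in> U")
  case True
  then obtain U where U: "U \<in> p" "x \<in> U" "y \<in> U"
    by blast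
  have "pair_covered p VI"
    unfolding pair_covered_def
  proof (intro ballI impI)
    fix a b assume ab: "a \<in> VI" "b \<in> VI" "a \<noteq> b"
    show "\<exists>U\<in>p. a \<in> U \<and> b \<in> U"
    proof (cases "{x, y} \<subseteq> {a, b}")
      case True
      then have "{a, b} = {x, y}"
        using xy(3) ab(3) by auto
      with U show ?thesis
        by (metis doubleton_eq_iff)
    next
      case False
      then have "{a, b} \<in> not_sharing VI x y"
        using ab unfolding not_sharing_def SG_iff by auto
      with sub show ?thesis
        by blast
    qed
  qed
  moreover have "VI \<in> SG VI"
    using xy(1) unfolding SG_iff by blast
  ultimately have "VI \<in> p"
    by (rule PS_closed[OF p, rotated])
  then show ?thesis
    using PS_top[OF p] by blast
next
  case False
  then have "p \<subseteq> not_sharing VI x y"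
    using PS_subset_SG[OF p] unfolding not_sharing_def by blast
  with sub show ?thesis
    by blast
qed

lemma PS_subset_of_not_sharing:
  assumes E: "Inter_closed (SG VI) E"
    and gen: "\<And>x y. x \<in> VI \<Longrightarrow> y \<in> VI \<Longrightarrow> x \<noteq> y \<Longrightarrow> not_sharing VI x y \<in> E"
  shows "PS VI \<subseteq> E"
proof
  fix p assume p: "p \<in> PS VI"
  have "{not_sharing VI x y | x y. x \<in> VI \<and> y \<in> VI \<and> x \<noteq> y \<and> p \<subseteq> not_sharing VI x y} \<subseteq> E"
    (is "?N \<subseteq> E")
    using gen by blast
  then have "SG VI \<inter> \<Inter>?N \<in> E"
    by (rule Inter_closedD[OF E])
  then show "p \<in> E"
    using PS_eq_Inter_not_sharing[OF p] by simp
qed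

lemma VI_mem_above_not_sharing:
  assumes xy: "x \<in> VI" "y \<in> VI" "x \<noteq> y" and above: "not_sharing VI x y \<subseteq> e"
    and e: "e \<in> Def_minus VI \<union> PSD_ddag VI \<union> (PS VI - {not_sharing VI x y})"
  shows "VI \<in> e"
proof -
  have VI_SG: "VI \<in> SG VI"
    using xy(1) by (auto simp: SG_iff)
  from e consider "e \<in> Def_minus VI" | "e \<in> PSD_ddag VI" | "e \<in> PS VI" "e \<noteq> not_sharing VI x y"
    by blast
  then show ?thesis
  proof cases
    case 1
    have "VI \<notin> singletons VI"
      using xy unfolding singletons_def by auto
    with 1 VI_SG show ?thesis
      unfolding Def_minus_def by blast
  next
    case 2
    then show ?thesis
      unfolding PSD_ddag_def by blast
  next
    case 3
    then have "e = SG VI"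
      using PS_above_not_sharing[OF 3(1) above xy] by blast
    with VI_SG show ?thesis
      by simp
  qed
qed

lemma SG_eq_above_PSD_ddag:
  assumes t: "t \<in> PSD_ddag VI" and above: "t \<subseteq> e" and e: "e \<in> Def_minus VI \<union> PS VI"
  shows "e = SG VI"
  using e
proof
  assume "e \<in> Def_minus VI"
  moreover have "singletons VI \<subseteq> e"
    using t above unfolding PSD_ddag_def singletons_def by blast
  ultimately show ?thesis
    by (rule Def_minus_top)
next
  assume "e \<in> PS VI"
  moreover have "VI \<in> e"
    using t above unfolding PSD_ddag_def by blast
  ultimately show ?thesis
    by (rule PS_top)
qed

lemma PSD_plus_iff: "sh \<in> PSD_plus VI \<longleftrightarrow> sh \<in> PSD VI \<and> singletons VI \<subseteq> sh"
  unfolding PSD_plus_def singletons_def by blast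

lemma PSD_plus_subset_PSD: "PSD_plus VI \<subseteq> PSD VI"
  unfolding PSD_plus_def by blast

lemma PSD_ddag_subset_PSD_plus: "PSD_ddag VI \<subseteq> PSD_plus VI"
  unfolding PSD_ddag_def PSD_plus_def by blast

lemma PSD_ddag_subset_PSD: "PSD_ddag VI \<subseteq> PSD VI"
  unfolding PSD_ddag_def by blast

section \<open>The decomposition of PSD and its minimality\<close>

context
  fixes VI :: "'a set"
  assumes finite_VI: "finite VI"
begin

lemma PSD_eq: "PSD VI = {sh. cov_closed sub_covered (SG VI) sh}"
  unfolding PSD_def SH_def rho_PSD_eq[OF finite_VI]
  by (rule range_closure_eq_cov_closed[OF _ sub_covered_trans]) (unfold sub_covered_def, blast)

lemma PSD_memD:
  assumes "sh \<in> PSD VI"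
  shows PSD_subset_SG: "sh \<subseteq> SG VI"
    and PSD_closed: "S \<in> SG VI \<Longrightarrow> sub_covered sh S \<Longrightarrow> S \<in> sh"
  using assms unfolding PSD_eq cov_closed_def by blast+

lemma PSD_memI:
  "sh \<subseteq> SG VI \<Longrightarrow> (\<And>S. S \<in> SG VI \<Longrightarrow> sub_covered sh S \<Longrightarrow> S \<in> sh) \<Longrightarrow> sh \<in> PSD VI"
  unfolding PSD_eq cov_closed_def by blast

lemma Inter_closed_PSD: "Inter_closed (SG VI) (PSD VI)"
  unfolding PSD_eq by (rule Inter_closed_cov_closed) (rule sub_covered_mono)

lemma uco_img_PSD_iff: "uco_img (PSD VI) D \<longleftrightarrow> D \<subseteq> PSD VI \<and> Inter_closed (SG VI) D"
  by (rule uco_img_iff_Inter_closed[OF Inter_closed_PSD])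

lemma PS_subset_PSD: "PS VI \<subseteq> PSD VI"
  using PS_subset_SG PS_closed sub_covered_imp_pair_covered by (blast intro: PSD_memI)

lemma PS_subset_PSD_plus: "PS VI \<subseteq> PSD_plus VI"
proof
  fix p assume p: "p \<in> PS VI"
  have "{x} \<in> p" if "x \<in> VI" for x
    using that by (intro PS_closed[OF p]) (auto simp: SG_iff pair_covered_def)
  with p PS_subset_PSD show "p \<in> PSD_plus VI"
    unfolding PSD_plus_iff singletons_def by blast
qed

lemma Def_minus_subset_PSD: "Def_minus VI \<subseteq> PSD VI"
proof
  fix D assume D: "D \<in> Def_minus VI"
  show "D \<in> PSD VI"
  proof (rule PSD_memI)
    show "D \<subseteq> SG VI"
      using D unfolding Def_minus_def by blast
  next
    fix S assume S: "S \<in> SG VI" and cov: "sub_covered D S"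
    show "S \<in> D"
    proof (rule ccontr)
      assume "S \<notin> D"
      then obtain x where x: "S = {x}"
        using D S unfolding Def_minus_def singletons_def by blast
      then obtain U where "U \<in> D" "x \<in> U" "U \<subseteq> S"
        using cov unfolding sub_covered_def by blast
      with x \<open>S \<notin> D\<close> show False
        by (metis empty_iff subset_singleton_iff)
    qed
  qed
qed

lemma uco_img_PS: "uco_img (PSD VI) (PS VI)"
  unfolding uco_img_PSD_iff using PS_subset_PSD Inter_closed_PS by blast

lemma uco_img_Def_minus: "uco_img (PSD VI) (Def_minus VI)"
  unfolding uco_img_PSD_iff using Def_minus_subset_PSD Inter_closed_Def_minus by blast

lemma uco_img_PSD_ddag:
  assumes "VI \<noteq> {}"
  shows "uco_img (PSD VI) (PSD_ddag VI)"
  unfolding uco_img_PSD_iff Inter_closed_def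
proof (intro conjI allI impI)
  show "PSD_ddag VI \<subseteq> PSD VI"
    by (rule PSD_ddag_subset_PSD)
  then show "PSD_ddag VI \<subseteq> Pow (SG VI)"
    using PSD_subset_SG by blast
  fix X assume X: "X \<subseteq> PSD_ddag VI"
  then have "SG VI \<inter> \<Inter>X \<in> PSD VI"
    using PSD_ddag_subset_PSD by (intro Inter_closedD[OF Inter_closed_PSD]) blast
  moreover have "VI \<in> SG VI \<inter> \<Inter>X"
    using assms X by (auto simp: PSD_ddag_def SG_iff)
  moreover have "{x} \<in> SG VI \<inter> \<Inter>X" if "x \<in> VI" for x
    using that X by (auto simp: PSD_ddag_def SG_iff)
  ultimately show "SG VI \<inter> \<Inter>X \<in> PSD_ddag VI"
    unfolding PSD_ddag_def by blast
qed

lemma Un_singletons_PSD_plus: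
  assumes sh: "sh \<in> PSD VI"
  shows "sh \<union> singletons VI \<in> PSD_plus VI"
  unfolding PSD_plus_iff
proof (intro conjI PSD_memI)
  show "sh \<union> singletons VI \<subseteq> SG VI"
    using PSD_subset_SG[OF sh] singletons_subset_SG by blast
next
  fix S assume S: "S \<in> SG VI" and cov: "sub_covered (sh \<union> singletons VI) S"
  show "S \<in> sh \<union> singletons VI"
  proof (cases "\<exists>x. S = {x}")
    case True
    with S show ?thesis
      unfolding SG_iff singletons_def by blast
  next
    case False
    with cov have "sub_covered sh S"
      by (rule sub_covered_Un_singletons)
    with S show ?thesis
      using PSD_closed[OF sh] by blast
  qed
qed blast

lemma PSD_plus_eq_Int_insert:
  assumes P: "P \<in> PSD_plus VI"
  shows "P = rho_PS VI P \<inter> insert VI P"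
proof (intro equalityI subsetI)
  fix S assume "S \<in> P"
  moreover have "P \<subseteq> SG VI"
    using P PSD_subset_SG unfolding PSD_plus_iff by blast
  ultimately show "S \<in> rho_PS VI P \<inter> insert VI P"
    unfolding rho_PS_eq pair_covered_def by blast
next
  fix S assume S: "S \<in> rho_PS VI P \<inter> insert VI P"
  show "S \<in> P"
  proof (cases "S = VI")
    case True
    have "\<Union>P \<subseteq> VI"
      using P PSD_subset_SG unfolding PSD_plus_iff SG_def by blast
    then have "sub_covered P VI"
      using S True P unfolding rho_PS_eq PSD_plus_iff by (blast intro: pair_covered_imp_sub_covered)
    with S True show ?thesis
      using P PSD_closed unfolding PSD_plus_iff rho_PS_eq by blast
  qed (use S in blast)
qed

lemma rho_PS_in_PS: "P \<subseteq> SG VI \<Longrightarrow> rho_PS VI P \<in> PS VI"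
  unfolding PS_def SH_def by blast

lemma insert_VI_PSD_ddag:
  assumes "VI \<noteq> {}" and P: "P \<in> PSD_plus VI"
  shows "insert VI P \<in> PSD_ddag VI"
proof -
  have PSD: "P \<in> PSD VI" and sing: "singletons VI \<subseteq> P"
    using P unfolding PSD_plus_iff by blast+
  have "insert VI P \<in> PSD VI"
  proof (rule PSD_memI)
    show "insert VI P \<subseteq> SG VI"
      using assms(1) PSD_subset_SG[OF PSD] by (simp add: SG_iff)
  next
    fix S assume S: "S \<in> SG VI" and cov: "sub_covered (insert VI P) S"
    show "S \<in> insert VI P"
    proof (cases "VI \<subseteq> S")
      case True
      with S show ?thesis
        by (simp add: SG_iff subset_antisym)
    next
      case False
      with cov have "sub_covered P S"
        by (rule sub_covered_insert)
      with S show ?thesis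
        using PSD_closed[OF PSD] by blast
    qed
  qed
  with sing show ?thesis
    unfolding PSD_ddag_def singletons_def by blast
qed

lemma PSD_eq_Int_Un_singletons:
  assumes "sh \<in> PSD VI"
  shows "sh = (SG VI - (singletons VI - sh)) \<inter> (sh \<union> singletons VI)"
  using PSD_subset_SG[OF assms] singletons_subset_SG by blast

lemma decomposition_PSD:
  assumes "VI \<noteq> {}"
  shows "decomposition (PSD VI) [Def_minus VI, PS VI, PSD_ddag VI]"
  unfolding decomposition_def
proof
  show "\<forall>D\<in>set [Def_minus VI, PS VI, PSD_ddag VI]. uco_img (PSD VI) D"
    using uco_img_Def_minus uco_img_PS uco_img_PSD_ddag[OF assms] by simp
  then have sub: "\<Union>(set [Def_minus VI, PS VI, PSD_ddag VI]) \<subseteq> PSD VI"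
    unfolding uco_img_def by blast
  have "rprod (PSD VI) [Def_minus VI, PS VI, PSD_ddag VI] = PSD VI"
  proof (rule rprod_eqI[OF Inter_closed_PSD sub])
    fix sh assume sh: "sh \<in> PSD VI"
    define P where "P = sh \<union> singletons VI"
    have P: "P \<in> PSD_plus VI"
      unfolding P_def using sh by (rule Un_singletons_PSD_plus)
    let ?D = "SG VI - (singletons VI - sh)"
    have "?D \<in> Def_minus VI"
      by (rule Diff_in_Def_minus) blast
    moreover have "rho_PS VI P \<in> PS VI"
      using P PSD_subset_SG unfolding PSD_plus_iff by (blast intro: rho_PS_in_PS)
    moreover have "insert VI P \<in> PSD_ddag VI"
      by (rule insert_VI_PSD_ddag[OF assms P])
    ultimately have "{?D, rho_PS VI P, insert VI P} \<subseteq> \<Union>(set [Def_minus VI, PS VI, PSD_ddag VI])"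
      by simp
    moreover have "SG VI \<inter> \<Inter>{?D, rho_PS VI P, insert VI P} = ?D \<inter> (rho_PS VI P \<inter> insert VI P)"
      by blast
    then have "sh = SG VI \<inter> \<Inter>{?D, rho_PS VI P, insert VI P}"
      using PSD_eq_Int_Un_singletons[OF sh] PSD_plus_eq_Int_insert[OF P] unfolding P_def by simp
    ultimately show "\<exists>X \<subseteq> \<Union>(set [Def_minus VI, PS VI, PSD_ddag VI]). sh = SG VI \<inter> \<Inter>X"
      by blast
  qed
  then show "PSD VI = rprod (PSD VI) [Def_minus VI, PS VI, PSD_ddag VI]"
    by simp
qed

lemma rprod_PSD_plus_Def_minus: "rprod (PSD VI) [PSD_plus VI, Def_minus VI] = PSD VI"
proof (rule rprod_eqI[OF Inter_closed_PSD])
  show "\<Union>(set [PSD_plus VI, Def_minus VI]) \<subseteq> PSD VI"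
    using Def_minus_subset_PSD PSD_plus_subset_PSD by simp
  fix sh assume sh: "sh \<in> PSD VI"
  let ?D = "SG VI - (singletons VI - sh)"
  have "?D \<in> Def_minus VI"
    by (rule Diff_in_Def_minus) blast
  moreover have "sh \<union> singletons VI \<in> PSD_plus VI"
    using sh by (rule Un_singletons_PSD_plus)
  ultimately have "{?D, sh \<union> singletons VI} \<subseteq> \<Union>(set [PSD_plus VI, Def_minus VI])"
    by simp
  moreover have "sh = SG VI \<inter> \<Inter>{?D, sh \<union> singletons VI}"
    using PSD_eq_Int_Un_singletons[OF sh] by blast
  ultimately show "\<exists>X \<subseteq> \<Union>(set [PSD_plus VI, Def_minus VI]). sh = SG VI \<inter> \<Inter>X"
    by blast
qed

(* Each SG - {{x}} is a coatom of PSD outside PSD^+, so it must itself be one of the factors. *)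
lemma Def_minus_subset_complement:
  assumes E: "uco_img (PSD VI) E" and prod: "rprod (PSD VI) [PSD_plus VI, E] = PSD VI"
  shows "Def_minus VI \<subseteq> E"
proof -
  have E_closed: "E \<subseteq> PSD VI" "Inter_closed (SG VI) E"
    using E unfolding uco_img_PSD_iff by blast+
  then have sub: "\<Union>(set [PSD_plus VI, E]) \<subseteq> PSD VI"
    using PSD_plus_subset_PSD by simp
  have coatom: "SG VI - {{x}} \<in> E" if x: "x \<in> VI" for x
  proof -
    have "SG VI - {{x}} \<in> PSD VI"
      using Diff_in_Def_minus[of "{{x}}"] Def_minus_subset_PSD x unfolding singletons_def by blast
    then have "SG VI - {{x}} \<in> rprod (PSD VI) [PSD_plus VI, E]"
      by (simp only: prod)
    then obtain X where X: "X \<subseteq> \<Union>(set [PSD_plus VI, E])" "SG VI - {{x}} = SG VI \<inter> \<Inter>X"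
      unfolding mem_rprod_iff[OF Inter_closed_PSD sub] by blast
    have "X \<subseteq> PSD VI"
      using X(1) sub by (rule order_trans)
    then have "X \<subseteq> Pow (SG VI)"
      using PSD_subset_SG by blast
    moreover have "{x} \<in> SG VI"
      using x by (simp add: SG_iff)
    ultimately have "SG VI - {{x}} \<in> \<Union>(set [PSD_plus VI, E])"
      using Diff_singleton_mem_of_Inter_eq[of X "SG VI" "{x}"] X by blast
    moreover have "SG VI - {{x}} \<notin> PSD_plus VI"
      using x unfolding PSD_plus_iff singletons_def by blast
    ultimately show ?thesis
      by simp
  qed
  show ?thesis
  proof
    fix D assume D: "D \<in> Def_minus VI"
    have "(\<lambda>S. SG VI - {S}) ` (SG VI - D) \<subseteq> E"
      using D coatom unfolding Def_minus_def singletons_def by blast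
    then have "SG VI \<inter> \<Inter>((\<lambda>S. SG VI - {S}) ` (SG VI - D)) \<in> E"
      by (rule Inter_closedD[OF E_closed(2)])
    then show "D \<in> E"
      using Def_minus_eq_Inter[OF D] by simp
  qed
qed

lemma uco_compl_PSD_plus: "uco_compl (PSD VI) (PSD_plus VI) = Def_minus VI"
  using uco_img_Def_minus rprod_PSD_plus_Def_minus Def_minus_subset_complement
  by (rule uco_compl_eqI)

lemma Def_minus_minimal:
  assumes E: "uco_img (PSD VI) E" and less: "E \<subset> Def_minus VI"
  shows "rprod (PSD VI) [E, PS VI, PSD_ddag VI] \<noteq> PSD VI"
proof
  assume prod: "rprod (PSD VI) [E, PS VI, PSD_ddag VI] = PSD VI"
  have "E \<subseteq> PSD VI"
    using E unfolding uco_img_def by blast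
  then have "PSD_plus VI \<union> E \<subseteq> PSD VI"
    using PSD_plus_subset_PSD by blast
  then have upper: "rprod (PSD VI) [PSD_plus VI, E] \<subseteq> PSD VI"
    unfolding rprod_def by (simp add: mclos_subset uco_img_self[OF Inter_closed_PSD])
  have "PSD VI = mclos (PSD VI) (E \<union> (PS VI \<union> PSD_ddag VI))"
    using prod unfolding rprod_def by simp
  also have "\<dots> \<subseteq> mclos (PSD VI) (PSD_plus VI \<union> E)"
    by (rule mclos_mono) (use PS_subset_PSD_plus PSD_ddag_subset_PSD_plus in blast)
  also have "\<dots> = rprod (PSD VI) [PSD_plus VI, E]"
    unfolding rprod_def by simp
  finally have "rprod (PSD VI) [PSD_plus VI, E] = PSD VI"
    using upper by (rule antisym[rotated])
  with E have "Def_minus VI \<subseteq> E"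
    by (rule Def_minus_subset_complement)
  with less show False
    by blast
qed

lemma PS_minimal:
  assumes E: "uco_img (PSD VI) E" and less: "E \<subset> PS VI"
  shows "rprod (PSD VI) [Def_minus VI, E, PSD_ddag VI] \<noteq> PSD VI"
proof
  assume prod: "rprod (PSD VI) [Def_minus VI, E, PSD_ddag VI] = PSD VI"
  have E_sub: "E \<subseteq> PSD VI" and E_closed: "Inter_closed (SG VI) E"
    using E unfolding uco_img_PSD_iff by blast+
  have sub: "\<Union>(set [Def_minus VI, E, PSD_ddag VI]) \<subseteq> PSD VI"
    using E_sub PS_subset_PSD Def_minus_subset_PSD PSD_ddag_subset_PSD by simp
  have "\<not> PS VI \<subseteq> E"
    using less by blast
  then obtain x y where xy: "x \<in> VI" "y \<in> VI" "x \<noteq> y" and notin: "not_sharing VI x y \<notin> E"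
    using PS_subset_of_not_sharing[OF E_closed] by blast
  have "not_sharing VI x y \<in> PSD VI"
    using not_sharing_PS[OF xy(3)] PS_subset_PSD by blast
  then have "not_sharing VI x y \<in> rprod (PSD VI) [Def_minus VI, E, PSD_ddag VI]"
    by (simp only: prod)
  then obtain X where X: "X \<subseteq> \<Union>(set [Def_minus VI, E, PSD_ddag VI])"
    "not_sharing VI x y = SG VI \<inter> \<Inter>X"
    unfolding mem_rprod_iff[OF Inter_closed_PSD sub] by blast
  have "VI \<in> e" if "e \<in> X" for e
  proof (rule VI_mem_above_not_sharing[OF xy])
    show "not_sharing VI x y \<subseteq> e"
      using X(2) that by blast
    show "e \<in> Def_minus VI \<union> PSD_ddag VI \<union> (PS VI - {not_sharing VI x y})"
      using X(1) that less notin by auto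
  qed
  then have "VI \<in> not_sharing VI x y"
    using X(2) xy(1) by (auto simp: SG_iff)
  with xy show False
    unfolding not_sharing_def by blast
qed

lemma PSD_ddag_minimal:
  assumes E: "uco_img (PSD VI) E" and less: "E \<subset> PSD_ddag VI"
  shows "rprod (PSD VI) [Def_minus VI, PS VI, E] \<noteq> PSD VI"
proof
  assume prod: "rprod (PSD VI) [Def_minus VI, PS VI, E] = PSD VI"
  have E_sub: "E \<subseteq> PSD VI" and E_closed: "Inter_closed (SG VI) E"
    using E unfolding uco_img_PSD_iff by blast+
  have sub: "\<Union>(set [Def_minus VI, PS VI, E]) \<subseteq> PSD VI"
    using E_sub PS_subset_PSD Def_minus_subset_PSD PSD_ddag_subset_PSD by simp
  have "PSD_ddag VI \<subseteq> E"
  proof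
    fix t assume t: "t \<in> PSD_ddag VI"
    then have "t \<in> PSD VI"
      using PSD_ddag_subset_PSD by blast
    then have "t \<in> rprod (PSD VI) [Def_minus VI, PS VI, E]"
      by (simp only: prod)
    then obtain X where X: "X \<subseteq> \<Union>(set [Def_minus VI, PS VI, E])" "t = SG VI \<inter> \<Inter>X"
      unfolding mem_rprod_iff[OF Inter_closed_PSD sub] by blast
    have "e = SG VI" if "e \<in> X" "e \<notin> E" for e
    proof (rule SG_eq_above_PSD_ddag[OF t])
      show "t \<subseteq> e"
        using X(2) that(1) by blast
      show "e \<in> Def_minus VI \<union> PS VI"
        using X(1) that by auto
    qed
    then have "X - E \<subseteq> {SG VI}"
      by blast
    then have "t = SG VI \<inter> \<Inter>(X \<inter> E)"
      unfolding X(2) by blast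
    moreover have "SG VI \<inter> \<Inter>(X \<inter> E) \<in> E"
      by (rule Inter_closedD[OF E_closed]) blast
    ultimately show "t \<in> E"
      by simp
  qed
  with less show False
    by blast
qed

end

theorem corollary5p3:
  fixes VI :: "'a set"
  assumes "finite VI" and "VI \<noteq> {}"
  shows "min_decomposition (PSD VI)
           [uco_compl (PSD VI) (PSD_plus VI), PS VI, PSD_ddag VI]"
  unfolding uco_compl_PSD_plus[OF assms(1)]
proof (rule min_decompositionI)
  show "uco_img (PSD VI) (PSD VI)"
    by (rule uco_img_self[OF Inter_closed_PSD[OF assms(1)]])
  show "decomposition (PSD VI) [Def_minus VI, PS VI, PSD_ddag VI]"
    by (rule decomposition_PSD[OF assms])
  fix i E
  assume "i < length [Def_minus VI, PS VI, PSD_ddag VI]" and E: "uco_img (PSD VI) E"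
    and less: "E \<subset> [Def_minus VI, PS VI, PSD_ddag VI] ! i"
  then consider "i = 0" | "i = 1" | "i = 2"
    by fastforce
  then show "rprod (PSD VI) ([Def_minus VI, PS VI, PSD_ddag VI][i := E]) \<noteq> PSD VI"
    by cases (use less Def_minus_minimal[OF assms(1) E] PS_minimal[OF assms(1) E]
        PSD_ddag_minimal[OF assms(1) E] in simp_all)
qed

end
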